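(* Let $\Omega\subset\mathbb{R}^N$ be a bounded open set, $T>0$, $Q_T=(0,T)\times\Omega$, $p>1$, $\sigma\ge1$. Let $w\in L^p(0,T;W^{1,p}_0(\Omega))\cap C([0,T];L^\sigma(\Omega))$ with $\|w(0)\|_{L^\sigma(\Omega)}=0$, and suppose there are constants $c_0>0$, $\eta>0$, $m\ge p$ such that for every $0\le t\le T$, $$\sup_{s\in(0,t)}\|w(s)\|_{L^\sigma(\Omega)}^\sigma+\|w\|_{L^p(0,t;W^{1,p}_0(\Omega))}^p\le c_0\sup_{s\in(0,t)}\|w(s)\|_{L^\sigma(\Omega)}^\eta\,\|w\|_{L^p(0,t;W^{1,p}_0(\Omega))}^m.$$ Then $w\equiv0$ in $Q_T$. *)

theory Defs
  imports "HOL-Analysis.Analysis"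
begin

definition grad :: "('a::euclidean_space \<Rightarrow> real) \<Rightarrow> 'a \<Rightarrow> 'a" where
  "grad f x = (\<Sum>b\<in>Basis. frechet_derivative f (at x) b *\<^sub>R b)"

fun Ck :: "nat \<Rightarrow> ('a::euclidean_space \<Rightarrow> real) \<Rightarrow> bool" where
  "Ck 0 f = continuous_on UNIV f"
| "Ck (Suc k) f = (f differentiable_on UNIV \<and> continuous_on UNIV f \<and>
                   (\<forall>b\<in>Basis. Ck k (\<lambda>x. frechet_derivative f (at x) b)))"

definition test_fun :: "'a::euclidean_space set \<Rightarrow> ('a \<Rightarrow> real) \<Rightarrow> bool" where
  "test_fun \<Omega> \<phi> \<longleftrightarrow> (\<forall>k. Ck k \<phi>) \<and> compact (closure {x. \<phi> x \<noteq> 0})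
                      \<and> closure {x. \<phi> x \<noteq> 0} \<subseteq> \<Omega>"

definition in_Lq :: "real \<Rightarrow> 'a::euclidean_space set \<Rightarrow> ('a \<Rightarrow> real) \<Rightarrow> bool" where
  "in_Lq q \<Omega> f \<longleftrightarrow> f \<in> borel_measurable (lebesgue_on \<Omega>) \<and>
                      integrable (lebesgue_on \<Omega>) (\<lambda>x. \<bar>f x\<bar> powr q)"

definition Lnorm :: "real \<Rightarrow> 'a::euclidean_space set \<Rightarrow> ('a \<Rightarrow> real) \<Rightarrow> real" where
  "Lnorm q \<Omega> f = (\<integral>x. \<bar>f x\<bar> powr q \<partial>lebesgue_on \<Omega>) powr (1 / q)"

definition in_W0 :: "real \<Rightarrow> 'a::euclidean_space set \<Rightarrow> ('a \<Rightarrow> real) \<Rightarrow> ('a \<Rightarrow> 'a) \<Rightarrow> bool" where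
  "in_W0 p \<Omega> u G \<longleftrightarrow> in_Lq p \<Omega> u \<and> G \<in> borel_measurable (lebesgue_on \<Omega>) \<and>
     integrable (lebesgue_on \<Omega>) (\<lambda>x. norm (G x) powr p) \<and>
     (\<exists>\<phi>::nat \<Rightarrow> 'a \<Rightarrow> real. (\<forall>k. test_fun \<Omega> (\<phi> k)) \<and>
        (\<lambda>k. Lnorm p \<Omega> (\<lambda>x. \<phi> k x - u x)) \<longlonglongrightarrow> 0 \<and>
        (\<lambda>k. Lnorm p \<Omega> (\<lambda>x. norm (grad (\<phi> k) x - G x))) \<longlonglongrightarrow> 0)"

definition W0norm :: "real \<Rightarrow> 'a::euclidean_space set \<Rightarrow> ('a \<Rightarrow> 'a) \<Rightarrow> real" where
  "W0norm p \<Omega> G = Lnorm p \<Omega> (\<lambda>x. norm (G x))"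

definition in_LpW0 :: "real \<Rightarrow> real \<Rightarrow> 'a::euclidean_space set \<Rightarrow> (real \<Rightarrow> 'a \<Rightarrow> real)
                        \<Rightarrow> (real \<Rightarrow> 'a \<Rightarrow> 'a) \<Rightarrow> bool" where
  "in_LpW0 p T \<Omega> w g \<longleftrightarrow>
     (\<lambda>z. w (fst z) (snd z)) \<in> borel_measurable (lebesgue_on ({0<..<T} \<times> \<Omega>)) \<and>
     (\<lambda>z. g (fst z) (snd z)) \<in> borel_measurable (lebesgue_on ({0<..<T} \<times> \<Omega>)) \<and>
     (AE t in lebesgue_on {0<..<T}. in_W0 p \<Omega> (w t) (g t)) \<and>
     integrable (lebesgue_on {0<..<T}) (\<lambda>t. W0norm p \<Omega> (g t) powr p)"

definition LpW0norm :: "real \<Rightarrow> real \<Rightarrow> 'a::euclidean_space set \<Rightarrow> (real \<Rightarrow> 'a \<Rightarrow> 'a) \<Rightarrow> real" where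
  "LpW0norm p t \<Omega> g = (\<integral>s. W0norm p \<Omega> (g s) powr p \<partial>lebesgue_on {0<..<t}) powr (1 / p)"

definition in_CLq :: "real \<Rightarrow> real \<Rightarrow> 'a::euclidean_space set \<Rightarrow> (real \<Rightarrow> 'a \<Rightarrow> real) \<Rightarrow> bool" where
  "in_CLq q T \<Omega> w \<longleftrightarrow> (\<forall>t\<in>{0..T}. in_Lq q \<Omega> (w t)) \<and>
     (\<forall>t\<in>{0..T}. ((\<lambda>s. Lnorm q \<Omega> (\<lambda>x. w s x - w t x)) \<longlongrightarrow> 0) (at t within {0..T}))"

end

theory Submission
  imports Defs
begin

(* The energy inequality is superlinear in the gradient norm (m \<ge> p) and carries the
   extra factor sup \<parallel>w\<parallel>^\<eta>, which is small while w stays close to 0 in L^\<sigma>.  So once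
   \<parallel>w(s)\<parallel>_\<sigma> vanishes on [0,t0], continuity in L^\<sigma> keeps it below a threshold on a short
   interval (t0,t], and there the inequality can only hold if both of its sides vanish.
   Continuity also closes the vanishing set from the left, hence a continuation argument in
   time gives \<parallel>w(t)\<parallel>_\<sigma> = 0 on [0,T], and Fubini turns this into w = 0 a.e. on Q_T. *)

lemma Lnorm_nonneg: "Lnorm q \<Omega> f \<ge> 0"
  by (simp add: Lnorm_def)

lemma AE_zero_if_Lnorm_eq_0:
  assumes "q > 0" "in_Lq q \<Omega> f" "Lnorm q \<Omega> f = 0"
  shows "AE x in lebesgue_on \<Omega>. f x = 0"
proof -
  have "(\<integral>x. \<bar>f x\<bar> powr q \<partial>lebesgue_on \<Omega>) = 0"
    using assms(3) by (simp add: Lnorm_def)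
  then have "AE x in lebesgue_on \<Omega>. \<bar>f x\<bar> powr q = 0"
    using assms(2) integral_nonneg_eq_0_iff_AE[of "lebesgue_on \<Omega>" "\<lambda>x. \<bar>f x\<bar> powr q"]
    by (simp add: in_Lq_def)
  then show ?thesis by eventually_elim simp
qed

lemma Lnorm_cong_AE:
  assumes "f \<in> borel_measurable (lebesgue_on \<Omega>)" "g \<in> borel_measurable (lebesgue_on \<Omega>)"
    and "AE x in lebesgue_on \<Omega>. \<bar>f x\<bar> = \<bar>g x\<bar>"
  shows "Lnorm q \<Omega> f = Lnorm q \<Omega> g"
proof -
  have "(\<integral>x. \<bar>f x\<bar> powr q \<partial>lebesgue_on \<Omega>) = (\<integral>x. \<bar>g x\<bar> powr q \<partial>lebesgue_on \<Omega>)"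
    by (rule integral_cong_AE) (use assms in auto)
  then show ?thesis by (simp add: Lnorm_def)
qed

lemma Lnorm_diff_AE_zero:
  assumes f: "f \<in> borel_measurable (lebesgue_on \<Omega>)" and g: "g \<in> borel_measurable (lebesgue_on \<Omega>)"
    and g0: "AE x in lebesgue_on \<Omega>. g x = 0"
  shows "Lnorm q \<Omega> (\<lambda>x. f x - g x) = Lnorm q \<Omega> f"
    and "Lnorm q \<Omega> (\<lambda>x. g x - f x) = Lnorm q \<Omega> f"
  using g0 by (auto intro!: Lnorm_cong_AE f g borel_measurable_diff elim: eventually_mono)

lemma in_CLq_Lnorm_zero_at_left_limit:
  assumes "\<sigma> > 0" and w: "in_CLq \<sigma> T \<Omega> w" and t: "t \<in> {0<..T}"
    and zero: "\<forall>s\<in>{0..<t}. Lnorm \<sigma> \<Omega> (w s) = 0"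
  shows "Lnorm \<sigma> \<Omega> (w t) = 0"
proof -
  have Lq: "in_Lq \<sigma> \<Omega> (w s)" if "s \<in> {0..T}" for s
    using w that by (simp add: in_CLq_def)
  have diff: "Lnorm \<sigma> \<Omega> (\<lambda>x. w s x - w t x) = Lnorm \<sigma> \<Omega> (w t)" if "s \<in> {0..<t}" for s
    using that t Lq[of s] Lq[of t] AE_zero_if_Lnorm_eq_0[OF \<open>\<sigma> > 0\<close>, of \<Omega> "w s"] zero
    by (intro Lnorm_diff_AE_zero(2)) (auto simp: in_Lq_def)
  have "((\<lambda>s. Lnorm \<sigma> \<Omega> (\<lambda>x. w s x - w t x)) \<longlongrightarrow> 0) (at t within {0..T})"
    using w t by (simp add: in_CLq_def)
  then have "((\<lambda>s. Lnorm \<sigma> \<Omega> (\<lambda>x. w s x - w t x)) \<longlongrightarrow> 0) (at t within {0..t})"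
    by (rule tendsto_within_subset) (use t in auto)
  then have "((\<lambda>s. Lnorm \<sigma> \<Omega> (\<lambda>x. w s x - w t x)) \<longlongrightarrow> 0) (at_left t)"
    using t by (simp add: at_within_Icc_at_left)
  moreover have "\<forall>\<^sub>F s in at_left t. Lnorm \<sigma> \<Omega> (\<lambda>x. w s x - w t x) = Lnorm \<sigma> \<Omega> (w t)"
    using eventually_at_left_real[of 0 t] t by (auto elim!: eventually_mono intro!: diff)
  ultimately have "((\<lambda>s. Lnorm \<sigma> \<Omega> (w t)) \<longlongrightarrow> 0) (at_left t)"
    by (rule Lim_transform_eventually)
  then show ?thesis by (simp add: tendsto_const_iff)
qed

lemma in_CLq_tendsto_Lnorm_zero:
  assumes "\<sigma> > 0" and w: "in_CLq \<sigma> T \<Omega> w" and t: "t \<in> {0..T}"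
    and zero: "Lnorm \<sigma> \<Omega> (w t) = 0"
  shows "((\<lambda>s. Lnorm \<sigma> \<Omega> (w s)) \<longlongrightarrow> 0) (at t within {0..T})"
proof -
  have Lq: "in_Lq \<sigma> \<Omega> (w s)" if "s \<in> {0..T}" for s
    using w that by (simp add: in_CLq_def)
  have "Lnorm \<sigma> \<Omega> (\<lambda>x. w s x - w t x) = Lnorm \<sigma> \<Omega> (w s)" if "s \<in> {0..T}" for s
    using that t Lq[of s] Lq[of t] AE_zero_if_Lnorm_eq_0[OF \<open>\<sigma> > 0\<close> _ zero]
    by (intro Lnorm_diff_AE_zero(1)) (auto simp: in_Lq_def)
  then have "\<forall>\<^sub>F s in at t within {0..T}.
      Lnorm \<sigma> \<Omega> (\<lambda>x. w s x - w t x) = Lnorm \<sigma> \<Omega> (w s)"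
    by (auto simp: eventually_at_filter)
  moreover have "((\<lambda>s. Lnorm \<sigma> \<Omega> (\<lambda>x. w s x - w t x)) \<longlongrightarrow> 0) (at t within {0..T})"
    using w t by (simp add: in_CLq_def)
  ultimately show ?thesis
    by (rule Lim_transform_eventually[rotated])
qed

lemma LpW0norm_nonneg: "LpW0norm p t \<Omega> g \<ge> 0"
  by (simp add: LpW0norm_def)

lemma LpW0norm_mono:
  assumes "in_LpW0 p T \<Omega> w g" "p > 0" "t \<le> T"
  shows "LpW0norm p t \<Omega> g \<le> LpW0norm p T \<Omega> g"
proof -
  have "(\<integral>s. W0norm p \<Omega> (g s) powr p \<partial>lebesgue_on {0<..<t})
      \<le> (\<integral>s. W0norm p \<Omega> (g s) powr p \<partial>lebesgue_on {0<..<T})"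
    using assms by (intro integral_mono_lebesgue_on_AE) (auto simp: in_LpW0_def)
  then show ?thesis
    unfolding LpW0norm_def using assms(2)
    by (intro powr_mono2) (auto intro: integral_nonneg_AE)
qed

lemma energy_absorption:
  fixes A Z c K p m :: real
  assumes "0 \<le> A" "0 \<le> Z" "0 \<le> c" "Z powr (m - p) \<le> K" "c * K < 1"
    and energy: "A + Z powr p \<le> c * Z powr m"
  shows "A = 0 \<and> Z = 0"
proof -
  have "c * Z powr m = c * Z powr (m - p) * Z powr p"
    by (simp flip: powr_add)
  also have "\<dots> \<le> c * K * Z powr p"
    using assms(3,4) by (intro mult_right_mono mult_left_mono) auto
  finally have "A + (1 - c * K) * Z powr p \<le> 0"
    using energy by (simp add: algebra_simps)
  moreover have "0 \<le> (1 - c * K) * Z powr p"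
    using assms(5) by simp
  ultimately have "A = 0" "(1 - c * K) * Z powr p = 0"
    using assms(1) by linarith+
  then show ?thesis
    using assms(5) by simp
qed

lemma small_sup_energy_inequality_vanishing:
  fixes L :: "real \<Rightarrow> real" and t \<sigma> \<eta> c Z K \<epsilon> p m :: real
  assumes "\<sigma> > 0" "\<eta> > 0" "0 \<le> c" "0 \<le> Z" "Z powr (m - p) \<le> K" "c * \<epsilon> powr \<eta> * K < 1"
    and bound: "\<forall>s\<in>{0<..<t}. 0 \<le> L s \<and> L s \<le> \<epsilon>"
    and energy: "(SUP s\<in>{0<..<t}. L s powr \<sigma>) + Z powr p
                  \<le> c * (SUP s\<in>{0<..<t}. L s) powr \<eta> * Z powr m"
  shows "\<forall>s\<in>{0<..<t}. L s = 0"
proof (cases "t > 0")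
  case True
  define Y where "Y = (SUP s\<in>{0<..<t}. L s)"
  define A where "A = (SUP s\<in>{0<..<t}. L s powr \<sigma>)"
  have ne: "{0<..<t} \<noteq> {}" and mid: "t / 2 \<in> {0<..<t}"
    using True by auto
  have "bdd_above ((\<lambda>s. L s powr \<sigma>) ` {0<..<t})"
    using bound \<open>\<sigma> > 0\<close> by (intro bdd_aboveI2[where M = "\<epsilon> powr \<sigma>"] powr_mono2) auto
  then have A_upper: "L s powr \<sigma> \<le> A" if "s \<in> {0<..<t}" for s
    unfolding A_def using that by (rule cSUP_upper2) simp
  have "Y \<le> \<epsilon>"
    unfolding Y_def using bound by (intro cSUP_least[OF ne]) auto
  moreover have "0 \<le> Y"
    unfolding Y_def using bound mid
    by (intro cSUP_upper2[of _ _ "t / 2"] bdd_aboveI2[where M = \<epsilon>]) auto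
  ultimately have "c * Y powr \<eta> * K \<le> c * \<epsilon> powr \<eta> * K"
    using assms(2-5) by (intro mult_right_mono mult_left_mono powr_mono2)
      (auto intro: order_trans[OF powr_ge_zero])
  then have "A = 0 \<and> Z = 0"
    using energy assms(3,4,6) A_upper[OF mid]
    by (intro energy_absorption[where K = K and m = m and p = p])
      (auto simp: A_def Y_def intro: assms(5) order_trans[OF powr_ge_zero])
  then show ?thesis
    using A_upper bound by (fastforce simp: order.antisym)
qed simp

lemma real_interval_continuation:
  fixes P :: "real \<Rightarrow> bool" and a b :: real
  assumes "a \<le> b" "P a"
    and closed: "\<And>t. t \<in> {a<..b} \<Longrightarrow> \<forall>s\<in>{a..<t}. P s \<Longrightarrow> P t"
    and extend: "\<And>t. t \<in> {a..<b} \<Longrightarrow> \<forall>s\<in>{a..t}. P s \<Longrightarrow> \<exists>t'>t. \<forall>s\<in>{t<..<t'}. P s"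
  shows "\<forall>s\<in>{a..b}. P s"
proof -
  define S where "S = {t\<in>{a..b}. \<forall>s\<in>{a..t}. P s}"
  define c where "c = Sup S"
  have aS: "a \<in> S" and bdd: "bdd_above S"
    using assms(1,2) by (auto simp: S_def intro: bdd_aboveI[where M = b])
  have "a \<le> c"
    unfolding c_def using aS bdd by (rule cSup_upper)
  have "c \<le> b"
    unfolding c_def using aS by (intro cSup_least) (auto simp: S_def)
  have below: "\<forall>s\<in>{a..<c}. P s"
  proof
    fix s assume "s \<in> {a..<c}"
    then obtain t where "t \<in> S" "s < t"
      using less_cSupD[of S s] aS by (auto simp: c_def)
    with \<open>s \<in> {a..<c}\<close> show "P s" by (auto simp: S_def)
  qed
  have "P c"
    using below assms(2) closed \<open>a \<le> c\<close> \<open>c \<le> b\<close> by (cases "c = a") auto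
  with below \<open>a \<le> c\<close> \<open>c \<le> b\<close> have cS: "c \<in> S"
    by (auto simp: S_def)
  have "c = b"
  proof (rule ccontr)
    assume "c \<noteq> b"
    with \<open>a \<le> c\<close> \<open>c \<le> b\<close> cS obtain t' where "t' > c" and right: "\<forall>s\<in>{c<..<t'}. P s"
      using extend[of c] by (auto simp: S_def)
    define t1 where "t1 = min ((c + t') / 2) b"
    have "c < t1"
      using \<open>t' > c\<close> \<open>c \<le> b\<close> \<open>c \<noteq> b\<close> by (simp add: t1_def)
    have "t1 \<in> S"
      using cS right \<open>c < t1\<close> \<open>a \<le> c\<close> unfolding S_def t1_def
      by (auto simp: not_le)
    then show False
      using \<open>c < t1\<close> cSup_upper[OF _ bdd] by (fastforce simp: c_def)
  qed
  with cS show ?thesis by (simp add: S_def)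
qed

lemma energy_inequality_extends_vanishing:
  fixes \<Omega> :: "'a::euclidean_space set"
    and w :: "real \<Rightarrow> 'a \<Rightarrow> real" and g :: "real \<Rightarrow> 'a \<Rightarrow> 'a"
    and T p \<sigma> c\<^sub>0 \<eta> m t\<^sub>0 :: real
  assumes "p > 0" "\<sigma> > 0" "c\<^sub>0 > 0" "\<eta> > 0" "m \<ge> p"
    and "in_LpW0 p T \<Omega> w g" and "in_CLq \<sigma> T \<Omega> w"
    and energy: "\<forall>t\<in>{0<..T}.
      (SUP s\<in>{0<..<t}. Lnorm \<sigma> \<Omega> (w s) powr \<sigma>) + LpW0norm p t \<Omega> g powr p
        \<le> c\<^sub>0 * (SUP s\<in>{0<..<t}. Lnorm \<sigma> \<Omega> (w s)) powr \<eta> * LpW0norm p t \<Omega> g powr m"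
    and t\<^sub>0: "t\<^sub>0 \<in> {0..<T}" and vanish: "\<forall>s\<in>{0..t\<^sub>0}. Lnorm \<sigma> \<Omega> (w s) = 0"
  shows "\<exists>t>t\<^sub>0. \<forall>s\<in>{t\<^sub>0<..<t}. Lnorm \<sigma> \<Omega> (w s) = 0"
proof -
  define L where "L s = Lnorm \<sigma> \<Omega> (w s)" for s
  define K where "K = LpW0norm p T \<Omega> g powr (m - p)"
  \<comment> \<open>makes \<open>c\<^sub>0 * \<epsilon> powr \<eta> * K = K / (K + 1) < 1\<close>\<close>
  define \<epsilon> where "\<epsilon> = (1 / (c\<^sub>0 * (K + 1))) powr (1 / \<eta>)"
  have "K \<ge> 0"
    by (simp add: K_def)
  then have "\<epsilon> > 0" and small: "c\<^sub>0 * \<epsilon> powr \<eta> * K < 1"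
    using assms(3,4) by (auto simp: \<epsilon>_def powr_powr)
  have "(L \<longlongrightarrow> 0) (at t\<^sub>0 within {0..T})"
    unfolding L_def using assms(2,7) t\<^sub>0 vanish by (intro in_CLq_tendsto_Lnorm_zero) auto
  then have "\<forall>\<^sub>F s in at t\<^sub>0 within {0..T}. L s < \<epsilon>"
    using \<open>\<epsilon> > 0\<close> by (rule order_tendstoD)
  then obtain \<delta> where "\<delta> > 0"
    and near: "\<And>s. s \<in> {0..T} \<Longrightarrow> s \<noteq> t\<^sub>0 \<Longrightarrow> dist s t\<^sub>0 < \<delta> \<Longrightarrow> L s < \<epsilon>"
    unfolding eventually_at by blast
  define t where "t = min (t\<^sub>0 + \<delta>) T"
  have t: "t\<^sub>0 < t" "t \<in> {0<..T}"
    using t\<^sub>0 \<open>\<delta> > 0\<close> by (auto simp: t_def)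
  have "L s \<le> \<epsilon>" if "s \<in> {0<..<t}" for s
  proof (cases "s \<le> t\<^sub>0")
    case True
    then show ?thesis using that vanish \<open>\<epsilon> > 0\<close> by (simp add: L_def)
  next
    case False
    then show ?thesis using that t near[of s] by (auto simp: t_def dist_real_def)
  qed
  moreover have "LpW0norm p t \<Omega> g powr (m - p) \<le> K"
    unfolding K_def using assms(1,5,6) t
    by (intro powr_mono2 LpW0norm_mono LpW0norm_nonneg) auto
  ultimately have "\<forall>s\<in>{0<..<t}. L s = 0"
    using assms(2-4) small energy t(2) LpW0norm_nonneg
    by (intro small_sup_energy_inequality_vanishing[where c = c\<^sub>0 and \<epsilon> = \<epsilon>])
      (auto simp: L_def Lnorm_nonneg)
  then show ?thesis
    using t t\<^sub>0 by (auto simp: L_def)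
qed

lemma AE_Times_zero_if_AE_slices_zero:
  fixes I :: "real set" and \<Omega> :: "'a::euclidean_space set" and w :: "real \<Rightarrow> 'a \<Rightarrow> real"
  assumes "open I" "open \<Omega>"
    and meas: "(\<lambda>z. w (fst z) (snd z)) \<in> borel_measurable (lebesgue_on (I \<times> \<Omega>))"
    and zero: "\<forall>s\<in>I. AE x in lebesgue_on \<Omega>. w s x = 0"
  shows "AE z in lebesgue_on (I \<times> \<Omega>). w (fst z) (snd z) = 0"
proof -
  let ?M = "(lborel :: real measure) \<Otimes>\<^sub>M (lborel :: 'a measure)"
  have pair: "pair_sigma_finite (lborel :: real measure) (lborel :: 'a measure)" ..
  have Q: "I \<times> \<Omega> \<in> sets lebesgue" and \<Omega>: "\<Omega> \<in> sets lebesgue"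
    using assms(1,2) by (auto simp: borel_open open_Times)
  \<comment> \<open>Tonelli needs product-measurability: extend by zero and pass to a Borel representative.\<close>
  define h where "h z = (if z \<in> I \<times> \<Omega> then w (fst z) (snd z) else 0)" for z
  have "h \<in> borel_measurable lebesgue"
    unfolding h_def using borel_measurable_if_I[OF meas Q] by simp
  then obtain h' where "h' \<in> borel_measurable lborel" and "AE z in lborel. h z = h' z"
    using completion_ex_borel_measurable_real by blast
  then have h'_meas: "h' \<in> borel_measurable ?M" and h'_AE: "AE z in ?M. h z = h' z"
    by (simp_all only: lborel_prod)
  have slice: "AE x in lborel. h (s, x) = 0" for s
  proof (cases "s \<in> I")
    case True
    then have "AE x in lborel. x \<in> \<Omega> \<longrightarrow> w s x = 0"
      using zero \<Omega> by (simp add: AE_restrict_space_iff AE_completion_iff)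
    then show ?thesis by eventually_elim (simp add: h_def)
  qed (simp add: h_def)
  have "AE s in lborel. AE x in lborel. h (s, x) = h' (s, x)"
    using pair_sigma_finite.AE_pair[OF pair h'_AE] by simp
  then have "AE s in lborel. AE x in lborel. h' (s, x) = 0"
  proof eventually_elim
    case (elim s)
    show ?case using elim slice[of s] by eventually_elim simp
  qed
  then have "AE z in ?M. h' z = 0"
  proof (rule pair_sigma_finite.AE_pair_measure[OF pair, rotated])
    show "{z \<in> space ?M. h' z = 0} \<in> sets ?M"
      using h'_meas by measurable
  qed
  then have "AE z in ?M. h z = 0"
    using h'_AE by eventually_elim simp
  then have "AE z in lebesgue. h z = 0"
    by (simp only: lborel_prod AE_completion_iff)
  then have "AE z in lebesgue. z \<in> I \<times> \<Omega> \<longrightarrow> w (fst z) (snd z) = 0"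
    by eventually_elim (simp add: h_def split: if_splits)
  then show ?thesis
    using Q by (simp add: AE_restrict_space_iff)
qed

theorem lemma3p3:
  fixes \<Omega> :: "'a::euclidean_space set"
    and w :: "real \<Rightarrow> 'a \<Rightarrow> real" and g :: "real \<Rightarrow> 'a \<Rightarrow> 'a"
    and T p \<sigma> c\<^sub>0 \<eta> m :: real
  assumes "open \<Omega>" and "bounded \<Omega>" and "T > 0" and "p > 1" and "\<sigma> \<ge> 1"
    and "in_LpW0 p T \<Omega> w g" and "in_CLq \<sigma> T \<Omega> w"
    and "Lnorm \<sigma> \<Omega> (w 0) = 0"
    and "c\<^sub>0 > 0" and "\<eta> > 0" and "m \<ge> p"
    and "\<forall>t\<in>{0<..T}.
      (SUP s\<in>{0<..<t}. Lnorm \<sigma> \<Omega> (w s) powr \<sigma>) + LpW0norm p t \<Omega> g powr p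
        \<le> c\<^sub>0 * (SUP s\<in>{0<..<t}. Lnorm \<sigma> \<Omega> (w s)) powr \<eta> * LpW0norm p t \<Omega> g powr m"
  shows "AE z in lebesgue_on ({0<..<T} \<times> \<Omega>). w (fst z) (snd z) = 0"
proof -
  have vanish: "\<forall>s\<in>{0..T}. Lnorm \<sigma> \<Omega> (w s) = 0"
  proof (rule real_interval_continuation)
    show "0 \<le> T" "Lnorm \<sigma> \<Omega> (w 0) = 0"
      using assms(3,8) by simp_all
    show "Lnorm \<sigma> \<Omega> (w t) = 0" if "t \<in> {0<..T}" "\<forall>s\<in>{0..<t}. Lnorm \<sigma> \<Omega> (w s) = 0" for t
      using that assms(5,7) by (intro in_CLq_Lnorm_zero_at_left_limit) auto
    show "\<exists>t'>t. \<forall>s\<in>{t<..<t'}. Lnorm \<sigma> \<Omega> (w s) = 0"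
      if "t \<in> {0..<T}" "\<forall>s\<in>{0..t}. Lnorm \<sigma> \<Omega> (w s) = 0" for t
      using that assms(4-7,9-12) by (intro energy_inequality_extends_vanishing) auto
  qed
  then have "\<forall>s\<in>{0<..<T}. AE x in lebesgue_on \<Omega>. w s x = 0"
    using assms(5,7) by (intro ballI AE_zero_if_Lnorm_eq_0[where q = \<sigma>]) (auto simp: in_CLq_def)
  then show ?thesis
    using assms(1,6) by (intro AE_Times_zero_if_AE_slices_zero) (auto simp: in_LpW0_def)
qed

end
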